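(* Let $D\in\mathbb{R}^{n\times n}$, $\lambda,\mu>0$, and let $\mathcal V,\mathcal W\subseteq\mathbb{R}^{n\times n}$ be arbitrary subsets. For $X\in\mathbb{R}^{n\times n}$ and $c>0$ let $\mathcal U_c(X)=\{\Delta\in\mathbb{R}^{n\times n}:\|\Delta\|_F\le c\|X\|_F\}$. Then the robust optimization problem $$\min_{X\in\mathcal V,\,Y\in\mathcal W}\ \max_{\Delta_1\in\mathcal U_\lambda(X),\,\Delta_2\in\mathcal U_\mu(Y)}\ \|D+\Delta_1+\Delta_2-X-Y\|_F$$ is equivalent to the regularized problem $$\min_{X\in\mathcal V,\,Y\in\mathcal W}\ \|D-X-Y\|_F+\lambda\|X\|_F+\mu\|Y\|_F,$$ in the sense that they have the same optimal value and the same optimal solutions.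
   Context: $\|\cdot\|_F$ denotes the Frobenius norm. *)

theory Defs
  imports "HOL-Analysis.Analysis"
begin

definition frob :: "real^'n^'n \<Rightarrow> real" where
  "frob A = sqrt (\<Sum>i\<in>UNIV. \<Sum>j\<in>UNIV. (A $ i $ j)\<^sup>2)"

definition unc :: "real \<Rightarrow> real^'n^'n \<Rightarrow> (real^'n^'n) set" where
  "unc c X = {\<Delta>. frob \<Delta> \<le> c * frob X}"

text \<open>Robust objective: worst case over the uncertainty sets (the maximum is attained,
  so Sup is the max).\<close>
definition robust_obj :: "real^'n^'n \<Rightarrow> real \<Rightarrow> real \<Rightarrow> real^'n^'n \<Rightarrow> real^'n^'n \<Rightarrow> real" where
  "robust_obj D lam mu X Y =
     (SUP p \<in> unc lam X \<times> unc mu Y. frob (D + fst p + snd p - X - Y))"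

definition reg_obj :: "real^'n^'n \<Rightarrow> real \<Rightarrow> real \<Rightarrow> real^'n^'n \<Rightarrow> real^'n^'n \<Rightarrow> real" where
  "reg_obj D lam mu X Y = frob (D - X - Y) + lam * frob X + mu * frob Y"

end

theory Submission
  imports Defs
begin

text \<open>The Frobenius norm is the Euclidean norm of the matrix space, so both uncertainty sets
  are closed balls around the origin. For a ball of radius \<open>a\<close> and one of radius \<open>b\<close>,
  the worst case of \<open>\<parallel>E + \<Delta>\<^sub>1 + \<Delta>\<^sub>2\<parallel>\<close> is \<open>\<parallel>E\<parallel> + a + b\<close>: the triangle inequality bounds it,
  and the bound is attained by pushing both perturbations in the direction of \<open>E\<close>.
  Hence the robust and the regularized objectives coincide pointwise, and so do their infima
  and minimizers.\<close>

lemma frob_eq_norm: "frob A = norm A"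
  unfolding frob_def norm_vec_def L2_set_def
  by (simp add: real_sqrt_pow2 sum_nonneg)

lemma unc_eq_cball: "unc c X = cball 0 (c * norm X)"
  by (auto simp: unc_def frob_eq_norm)

lemma ex_unit_direction:
  fixes e :: "'a::euclidean_space"
  shows "\<exists>u. norm u = 1 \<and> norm e *\<^sub>R u = e"
proof (cases "e = 0")
  case True
  then show ?thesis using vector_choose_size[of 1, where 'a='a] by auto
next
  case False
  then show ?thesis by (intro exI[of _ "e /\<^sub>R norm e"]) simp
qed

lemma worst_case_norm_add_cballs:
  fixes e :: "'a::euclidean_space"
  assumes "a \<ge> 0" and "b \<ge> 0"
  shows "(SUP p \<in> cball 0 a \<times> cball 0 b. norm (e + fst p + snd p)) = norm e + a + b"
proof (rule cSup_eq_maximum)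
  obtain u where u: "norm u = 1" and e_eq: "norm e *\<^sub>R u = e"
    using ex_unit_direction by blast
  let ?p = "(a *\<^sub>R u, b *\<^sub>R u)"
  have "e + fst ?p + snd ?p = (norm e + a + b) *\<^sub>R u"
    by (subst (1) e_eq[symmetric]) (simp add: algebra_simps)
  then have "norm (e + fst ?p + snd ?p) = norm e + a + b"
    using u assms by simp
  moreover have "?p \<in> cball 0 a \<times> cball 0 b"
    using u assms by simp
  ultimately show "norm e + a + b \<in> (\<lambda>p. norm (e + fst p + snd p)) ` (cball 0 a \<times> cball 0 b)"
    by (rule image_eqI[OF sym])
next
  fix x assume "x \<in> (\<lambda>p. norm (e + fst p + snd p)) ` (cball 0 a \<times> cball 0 b)"
  then obtain d1 d2 where "norm d1 \<le> a" "norm d2 \<le> b" and x: "x = norm (e + d1 + d2)"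
    by auto
  moreover have "norm (e + d1 + d2) \<le> norm e + norm d1 + norm d2"
    using norm_triangle_ineq[of "e + d1" d2] norm_triangle_ineq[of e d1] by linarith
  ultimately show "x \<le> norm e + a + b"
    by linarith
qed

lemma robust_obj_eq_reg_obj:
  assumes "lam \<ge> 0" and "mu \<ge> 0"
  shows "robust_obj D lam mu X Y = reg_obj D lam mu X Y"
proof -
  have "robust_obj D lam mu X Y
      = (SUP p \<in> cball 0 (lam * norm X) \<times> cball 0 (mu * norm Y). norm ((D - X - Y) + fst p + snd p))"
    unfolding robust_obj_def unc_eq_cball frob_eq_norm
    by (rule SUP_cong) (simp_all add: algebra_simps)
  also have "\<dots> = reg_obj D lam mu X Y"
    using assms by (simp add: worst_case_norm_add_cballs reg_obj_def frob_eq_norm)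
  finally show ?thesis .
qed

theorem proposition3:
  fixes D :: "real^'n^'n" and lam mu :: real and V W :: "(real^'n^'n) set"
  assumes "lam > 0" and "mu > 0"
  shows "(INF p \<in> V \<times> W. robust_obj D lam mu (fst p) (snd p))
           = (INF p \<in> V \<times> W. reg_obj D lam mu (fst p) (snd p))
         \<and> (\<forall>X Y. (X \<in> V \<and> Y \<in> W \<and>
                     (\<forall>X'\<in>V. \<forall>Y'\<in>W. robust_obj D lam mu X Y \<le> robust_obj D lam mu X' Y'))
                  \<longleftrightarrow> (X \<in> V \<and> Y \<in> W \<and>
                     (\<forall>X'\<in>V. \<forall>Y'\<in>W. reg_obj D lam mu X Y \<le> reg_obj D lam mu X' Y')))"
proof -
  have "robust_obj D lam mu = reg_obj D lam mu"
    using assms by (intro ext robust_obj_eq_reg_obj) simp_all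
  then show ?thesis by simp
qed

end
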